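(* Let $G$ be a compact vector space over $\mathbb{F}_2$, let $k\ge1$ with $\dim\widehat G\ge 2^{k-1}$, and put $\alpha=\sum_{m=0}^{k-1}2^{-2^m}$. Then: (i) for every subgroup $V\le\widehat G$ with $|V|\le 2^{2^{k-1}}-1$ one has $\{\alpha|V|\}(1-\{\alpha|V|\})\ge\tfrac18|V|^{-1}$; (ii) there is a measurable set $A\subset G$ of density $\alpha$ with $\|\chi_A\|_{A(G)}\le k$.
   Context: $G$ is a compact Hausdorff abelian group with $x+x=0$ for all $x$; $\widehat G$ its dual, a discrete $\mathbb{F}_2$-vector space; $\mu_G$ Haar probability measure; density of $A$ is $\mu_G(A)$; $\widehat f(\gamma)=\int_G f\overline\gamma\,d\mu_G$; $\|f\|_{A(G)}=\sum_{\gamma\in\widehat G}|\widehat f(\gamma)|$. $\{t\}$ is the fractional part of $t$. *)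

theory Defs
  imports "HOL-Analysis.Analysis"
begin

definition dual_group :: "('a::topological_ab_group_add \<Rightarrow> complex) set" where
  "dual_group = {\<gamma>. continuous_on UNIV \<gamma> \<and> (\<forall>x. cmod (\<gamma> x) = 1) \<and>
                      (\<forall>x y. \<gamma> (x + y) = \<gamma> x * \<gamma> y)}"

definition dual_subgroup :: "('a::topological_ab_group_add \<Rightarrow> complex) set \<Rightarrow> bool" where
  "dual_subgroup V \<longleftrightarrow> V \<subseteq> dual_group \<and> (\<lambda>x. 1) \<in> V \<and>
     (\<forall>a\<in>V. \<forall>b\<in>V. (\<lambda>x. a x * b x) \<in> V) \<and> (\<forall>a\<in>V. (\<lambda>x. cnj (a x)) \<in> V)"

text \<open>The dual of an F_2-vector space is an F_2-vector space (written multiplicatively);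
  dim \<ge> d means there are d linearly independent characters.\<close>
definition dual_dim_ge :: "'a::topological_ab_group_add itself \<Rightarrow> nat \<Rightarrow> bool" where
  "dual_dim_ge _ d \<longleftrightarrow> (\<exists>S. S \<subseteq> (dual_group :: ('a \<Rightarrow> complex) set) \<and> finite S \<and> card S = d \<and>
      (\<forall>T. T \<subseteq> S \<and> T \<noteq> {} \<longrightarrow> (\<lambda>x. \<Prod>\<gamma>\<in>T. \<gamma> x) \<noteq> (\<lambda>x. 1)))"

definition haar_prob :: "'a::topological_ab_group_add measure \<Rightarrow> bool" where
  "haar_prob M \<longleftrightarrow> emeasure M UNIV = 1 \<and> sets M = sets borel \<and>
     (\<forall>x A. A \<in> sets borel \<longrightarrow> emeasure M ((+) x ` A) = emeasure M A)"

definition fourier_coeff :: "'a::topological_ab_group_add measure \<Rightarrow> ('a \<Rightarrow> complex) \<Rightarrow> ('a \<Rightarrow> complex) \<Rightarrow> complex" where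
  "fourier_coeff M f \<gamma> = integral\<^sup>L M (\<lambda>x. f x * cnj (\<gamma> x))"

definition A_norm :: "'a::topological_ab_group_add measure \<Rightarrow> ('a \<Rightarrow> complex) \<Rightarrow> ennreal" where
  "A_norm M f = (\<Sum>\<^sub>\<infinity>\<gamma>\<in>dual_group. ennreal (cmod (fourier_coeff M f \<gamma>)))"

end

theory Submission
  imports Defs "HOL-Library.Function_Algebras"
begin

(* Characters of G take only the values 1 and -1, so a finite subgroup V of the dual is an
   elementary abelian 2-group: |V| = 2^d, and the bound on |V| forces d < 2^(k-1). Split alpha 2^d
   at the least m0 with d < 2^m0: the terms with m < m0 are integers, and the remaining tail lies
   between e and 4e/3, where e = 2^d 2^(-2^m0) lies in [2^(-d), 1/2].

   For (ii), enumerate 2^(k-1) independent characters g_0, g_1, ... and let B_m be the set where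
   g_m = -1 and g_j = 1 for the other j < 2^m. Its indicator is 2^(-2^m) prod_j (1 + s_j g_j),
   a combination of characters whose coefficients have total mass 1; by independence only the
   constant term survives integration, so B_m has density 2^(-2^m). The sets B_m, m < k, are
   pairwise disjoint since they disagree on g_m, so their union A has density alpha and
   A(G)-norm at most k. *)

section \<open>Characters of a group of exponent two\<close>

lemma dual_group_at_zero:
  assumes "\<gamma> \<in> dual_group"
  shows "\<gamma> 0 = 1"
proof -
  have "\<gamma> (0 + 0) = \<gamma> 0 * \<gamma> 0" and "cmod (\<gamma> 0) = 1"
    using assms unfolding dual_group_def by blast+
  then show ?thesis by auto
qed

lemma dual_group_square:
  fixes \<gamma> :: "'a::topological_ab_group_add \<Rightarrow> complex"
  assumes "\<gamma> \<in> dual_group" and "\<forall>x::'a. x + x = 0"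
  shows "\<gamma> x * \<gamma> x = 1"
proof -
  have "\<gamma> (x + x) = \<gamma> x * \<gamma> x"
    using assms(1) by (simp add: dual_group_def)
  then show ?thesis
    using assms(2) dual_group_at_zero[OF assms(1)] by simp
qed

lemma dual_group_pm_one:
  fixes \<gamma> :: "'a::topological_ab_group_add \<Rightarrow> complex"
  assumes "\<gamma> \<in> dual_group" and "\<forall>x::'a. x + x = 0"
  shows "\<gamma> x = 1 \<or> \<gamma> x = -1"
  using dual_group_square[OF assms, of x] power2_eq_1_iff[of "\<gamma> x"] by (simp add: power2_eq_square)

lemma dual_group_one: "(\<lambda>x. 1) \<in> dual_group"
  unfolding dual_group_def by auto

lemma dual_group_mult: "\<gamma> \<in> dual_group \<Longrightarrow> \<delta> \<in> dual_group \<Longrightarrow> (\<lambda>x. \<gamma> x * \<delta> x) \<in> dual_group"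
  unfolding dual_group_def by (auto intro!: continuous_intros simp: norm_mult)

lemma dual_group_cnj: "\<gamma> \<in> dual_group \<Longrightarrow> (\<lambda>x. cnj (\<gamma> x)) \<in> dual_group"
  unfolding dual_group_def by (auto intro!: continuous_intros)

lemma dual_group_prod: "finite T \<Longrightarrow> T \<subseteq> dual_group \<Longrightarrow> (\<lambda>x. \<Prod>\<gamma>\<in>T. \<gamma> x) \<in> dual_group"
  by (induction T rule: finite_induct) (simp_all add: dual_group_one dual_group_mult)

lemma dual_group_mult_cnj_eq_one_iff:
  assumes "\<psi> \<in> dual_group" and "\<eta> \<in> dual_group"
  shows "(\<lambda>x. \<psi> x * cnj (\<eta> x)) = (\<lambda>x. 1) \<longleftrightarrow> \<psi> = \<eta>"
proof -
  have "\<eta> x * cnj (\<eta> x) = 1" for x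
    using assms(2) complex_norm_square[of "\<eta> x"] unfolding dual_group_def by simp
  then have "\<psi> x * cnj (\<eta> x) = 1 \<longleftrightarrow> \<psi> x = \<eta> x" for x
    by (metis mult.commute mult.left_neutral mult.assoc)
  then show ?thesis by (auto simp: fun_eq_iff)
qed

section \<open>Haar measure and orthogonality of characters\<close>

lemma haar_space: "haar_prob M \<Longrightarrow> space M = UNIV"
  unfolding haar_prob_def by (metis sets_eq_imp_space_eq space_borel)

lemma haar_finite_measure: "haar_prob M \<Longrightarrow> finite_measure M"
  by (rule finite_measureI) (simp add: haar_space haar_prob_def)

lemma haar_measure_space: "haar_prob M \<Longrightarrow> measure M (space M) = 1"
  by (simp add: haar_space haar_prob_def measure_def)

lemma haar_borel_measurable_continuous:
  "haar_prob M \<Longrightarrow> continuous_on UNIV f \<Longrightarrow> f \<in> borel_measurable M"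
  unfolding haar_prob_def by (metis borel_measurable_continuous_onI measurable_cong_sets)

lemma haar_integrable_char:
  assumes "haar_prob M" and "\<gamma> \<in> dual_group"
  shows "integrable M \<gamma>"
proof (rule finite_measure.integrable_const_bound[OF haar_finite_measure[OF assms(1)], where B=1])
  show "AE x in M. norm (\<gamma> x) \<le> 1" and "\<gamma> \<in> borel_measurable M"
    using assms haar_borel_measurable_continuous unfolding dual_group_def by auto
qed

lemma haar_measurable_translation:
  fixes M :: "'a::topological_ab_group_add measure"
  assumes "haar_prob M"
  shows "(\<lambda>x. x + y) \<in> measurable M M"
proof -
  have "(\<lambda>x. x + y) \<in> borel_measurable borel"
    by (intro borel_measurable_continuous_onI continuous_intros)
  then show ?thesis
    using measurable_cong_sets[of M borel M borel] assms by (simp add: haar_prob_def)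
qed

lemma haar_distr_translation:
  fixes M :: "'a::topological_ab_group_add measure"
  assumes haar: "haar_prob M"
  shows "distr M M (\<lambda>x. x + y) = M"
proof (rule measure_eqI)
  fix A assume "A \<in> sets (distr M M (\<lambda>x. x + y))"
  then have A: "A \<in> sets M" "A \<in> sets borel" using haar by (auto simp: haar_prob_def)
  have "(\<lambda>x. x + y) -` A \<inter> space M = (+) (-y) ` A"
    using haar_space[OF haar] by (force simp: image_iff algebra_simps)
  then have "emeasure (distr M M (\<lambda>x. x + y)) A = emeasure M ((+) (-y) ` A)"
    by (simp only: emeasure_distr[OF haar_measurable_translation[OF haar] A(1)])
  also have "\<dots> = emeasure M A"
    using haar A(2) unfolding haar_prob_def by blast
  finally show "emeasure (distr M M (\<lambda>x. x + y)) A = emeasure M A" .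
qed simp

lemma integral_char:
  fixes M :: "'a::topological_ab_group_add measure"
  assumes haar: "haar_prob M" and \<gamma>: "\<gamma> \<in> dual_group"
  shows "integral\<^sup>L M \<gamma> = (if \<gamma> = (\<lambda>x. 1) then 1 else 0)"
proof (cases "\<gamma> = (\<lambda>x. 1)")
  case True
  then show ?thesis using haar_measure_space[OF haar] by simp
next
  case False
  then obtain y where y: "\<gamma> y \<noteq> 1" by auto
  have "integral\<^sup>L M \<gamma> = integral\<^sup>L (distr M M (\<lambda>x. x + y)) \<gamma>"
    by (simp add: haar_distr_translation[OF haar])
  also have "\<dots> = integral\<^sup>L M (\<lambda>x. \<gamma> x * \<gamma> y)"
    using \<gamma> haar_borel_measurable_continuous[OF haar]
    by (subst integral_distr[OF haar_measurable_translation[OF haar]]) (auto simp: dual_group_def)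
  finally have "integral\<^sup>L M \<gamma> * (1 - \<gamma> y) = 0"
    by (simp add: algebra_simps)
  then show ?thesis using y False by simp
qed

lemma fourier_coeff_char:
  assumes "haar_prob M" and "\<psi> \<in> dual_group" and "\<eta> \<in> dual_group"
  shows "fourier_coeff M \<psi> \<eta> = (if \<psi> = \<eta> then 1 else 0)"
  using integral_char[OF assms(1) dual_group_mult[OF assms(2) dual_group_cnj[OF assms(3)]]]
  by (simp add: fourier_coeff_def dual_group_mult_cnj_eq_one_iff[OF assms(2,3)])

section \<open>The Fourier algebra norm\<close>

lemma integrable_mult_cnj_char:
  assumes "haar_prob M" and "integrable M f" and "\<gamma> \<in> dual_group"
  shows "integrable M (\<lambda>x. f x * cnj (\<gamma> x))"
proof (rule Bochner_Integration.integrable_bound[OF assms(2)])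
  have "(\<lambda>x. cnj (\<gamma> x)) \<in> borel_measurable M"
    using assms(3) unfolding dual_group_def
    by (intro haar_borel_measurable_continuous[OF assms(1)] continuous_intros) simp
  with borel_measurable_integrable[OF assms(2)]
  show "(\<lambda>x. f x * cnj (\<gamma> x)) \<in> borel_measurable M"
    by (rule borel_measurable_times)
  show "AE x in M. norm (f x * cnj (\<gamma> x)) \<le> norm (f x)"
    using assms(3) by (simp add: dual_group_def norm_mult)
qed

lemma A_norm_add_le:
  assumes haar: "haar_prob M" and "integrable M f" and "integrable M g"
  shows "A_norm M (\<lambda>x. f x + g x) \<le> A_norm M f + A_norm M g"
proof -
  have "fourier_coeff M (\<lambda>x. f x + g x) \<eta> = fourier_coeff M f \<eta> + fourier_coeff M g \<eta>"
    if "\<eta> \<in> dual_group" for \<eta>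
    using integrable_mult_cnj_char[OF haar _ that] assms
    by (simp add: fourier_coeff_def distrib_right)
  then have "A_norm M (\<lambda>x. f x + g x) \<le>
      (\<Sum>\<^sub>\<infinity>\<eta>\<in>dual_group. ennreal (cmod (fourier_coeff M f \<eta>)) + ennreal (cmod (fourier_coeff M g \<eta>)))"
    unfolding A_norm_def
    by (intro infsum_mono nonneg_summable_on_complete)
      (auto simp flip: ennreal_plus intro!: ennreal_leI norm_triangle_ineq)
  also have "\<dots> = A_norm M f + A_norm M g"
    unfolding A_norm_def by (intro infsum_add nonneg_summable_on_complete) simp_all
  finally show ?thesis .
qed

lemma A_norm_sum_le:
  assumes haar: "haar_prob M" and "finite I" and "\<And>i. i \<in> I \<Longrightarrow> integrable M (f i)"
  shows "A_norm M (\<lambda>x. \<Sum>i\<in>I. f i x) \<le> (\<Sum>i\<in>I. A_norm M (f i))"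
  using assms(2,3)
proof (induction I rule: finite_induct)
  case empty
  then show ?case by (simp add: A_norm_def fourier_coeff_def)
next
  case (insert i I)
  then have "A_norm M (\<lambda>x. \<Sum>j\<in>insert i I. f j x) \<le> A_norm M (f i) + A_norm M (\<lambda>x. \<Sum>j\<in>I. f j x)"
    by (simp add: A_norm_add_le[OF haar])
  also have "\<dots> \<le> (\<Sum>j\<in>insert i I. A_norm M (f j))"
    using insert by (simp add: add_left_mono)
  finally show ?case .
qed

lemma A_norm_scaled_char:
  fixes M :: "'a::topological_ab_group_add measure"
  assumes haar: "haar_prob M" and \<psi>: "\<psi> \<in> dual_group"
  shows "A_norm M (\<lambda>x. c * \<psi> x) = ennreal (cmod c)"
proof -
  have "A_norm M (\<lambda>x. c * \<psi> x) = (\<Sum>\<^sub>\<infinity>\<eta>\<in>dual_group. if \<eta> = \<psi> then ennreal (cmod c) else 0)"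
    unfolding A_norm_def
  proof (rule infsum_cong)
    fix \<eta> :: "'a \<Rightarrow> complex" assume "\<eta> \<in> dual_group"
    then show "ennreal (cmod (fourier_coeff M (\<lambda>x. c * \<psi> x) \<eta>)) = (if \<eta> = \<psi> then ennreal (cmod c) else 0)"
      using fourier_coeff_char[OF haar \<psi> \<open>\<eta> \<in> dual_group\<close>]
      by (auto simp: fourier_coeff_def mult.assoc)
  qed
  also have "\<dots> = (\<Sum>\<^sub>\<infinity>\<eta>\<in>{\<psi>}. ennreal (cmod c))"
    by (rule infsum_cong_neutral) (use \<psi> in auto)
  finally show ?thesis by simp
qed

lemma A_norm_indicator_disjoint_UN_le:
  assumes haar: "haar_prob M" and "finite I" and "disjoint_family_on B I"
    and sets: "\<And>i. i \<in> I \<Longrightarrow> B i \<in> sets M"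
  shows "A_norm M (indicator (\<Union>i\<in>I. B i)) \<le> (\<Sum>i\<in>I. A_norm M (indicator (B i)))"
proof -
  have "indicator (\<Union>i\<in>I. B i) = (\<lambda>x. \<Sum>i\<in>I. indicator (B i) x :: complex)"
    using assms(2,3) by (simp add: indicator_UN_disjoint fun_eq_iff)
  moreover have "integrable M (indicator (B i) :: _ \<Rightarrow> complex)" if "i \<in> I" for i
    using sets[OF that] haar_finite_measure[OF haar]
    by (intro finite_measure.integrable_const_bound[where B=1]) (auto simp: indicator_def)
  ultimately show ?thesis
    using A_norm_sum_le[OF haar assms(2)] by simp
qed

section \<open>Independent characters and their cylinder sets\<close>

definition char_independent :: "('a \<Rightarrow> complex) set \<Rightarrow> bool" where
  "char_independent S \<longleftrightarrow> (\<forall>T. T \<subseteq> S \<and> T \<noteq> {} \<longrightarrow> (\<lambda>x. \<Prod>\<gamma>\<in>T. \<gamma> x) \<noteq> (\<lambda>x. 1))"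

lemma dual_dim_ge_iff:
  "dual_dim_ge TYPE('a::topological_ab_group_add) d \<longleftrightarrow>
    (\<exists>S\<subseteq>(dual_group :: ('a \<Rightarrow> complex) set). finite S \<and> card S = d \<and> char_independent S)"
  unfolding dual_dim_ge_def char_independent_def by (rule refl)

lemma dual_dim_ge_enumeration:
  assumes "dual_dim_ge TYPE('a::topological_ab_group_add) n"
  obtains g :: "nat \<Rightarrow> 'a::topological_ab_group_add \<Rightarrow> complex"
  where "inj_on g {..<n}" "g ` {..<n} \<subseteq> dual_group" "char_independent (g ` {..<n})"
proof -
  obtain S :: "('a \<Rightarrow> complex) set"
    where S: "S \<subseteq> dual_group" "finite S" "card S = n" "char_independent S"
    using assms unfolding dual_dim_ge_iff by blast
  obtain g where "bij_betw g {..<n} S"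
    using ex_bij_betw_nat_finite[OF S(2)] unfolding S(3) atLeast0LessThan by blast
  with S that show ?thesis
    by (auto simp: bij_betw_def)
qed

lemma char_independent_subset: "char_independent S \<Longrightarrow> T \<subseteq> S \<Longrightarrow> char_independent T"
  unfolding char_independent_def by blast

lemma char_enumeration_restrict:
  fixes g :: "nat \<Rightarrow> 'a::topological_ab_group_add \<Rightarrow> complex"
  assumes "inj_on g {..<n}" "g ` {..<n} \<subseteq> dual_group" "char_independent (g ` {..<n})"
    and "p \<le> n"
  shows "inj_on g {..<p}" "g ` {..<p} \<subseteq> dual_group" "char_independent (g ` {..<p})"
proof -
  have sub: "{..<p} \<subseteq> {..<n}"
    using assms(4) by simp
  show "inj_on g {..<p}"
    using inj_on_subset[OF assms(1) sub] .
  show "g ` {..<p} \<subseteq> dual_group"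
    using order_trans[OF image_mono[OF sub] assms(2)] .
  show "char_independent (g ` {..<p})"
    using char_independent_subset[OF assms(3) image_mono[OF sub]] .
qed

definition char_cylinder :: "('a \<Rightarrow> complex) set \<Rightarrow> (('a \<Rightarrow> complex) \<Rightarrow> complex) \<Rightarrow> 'a set" where
  "char_cylinder S \<sigma> = {x. \<forall>\<gamma>\<in>S. \<gamma> x = \<sigma> \<gamma>}"

lemma indicator_char_cylinder:
  fixes S :: "('a::topological_ab_group_add \<Rightarrow> complex) set"
  assumes exp2: "\<forall>x::'a. x + x = 0" and S: "finite S" "S \<subseteq> dual_group" and \<sigma>: "\<sigma> ` S \<subseteq> {1, -1}"
  shows "indicator (char_cylinder S \<sigma>) x =
    (\<Sum>T\<in>Pow S. ((1/2) ^ card S * (\<Prod>\<gamma>\<in>T. \<sigma> \<gamma>)) * (\<Prod>\<gamma>\<in>T. \<gamma> x))"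
proof -
  have factor: "(1 + \<sigma> \<gamma> * \<gamma> x) / 2 = (if \<gamma> x = \<sigma> \<gamma> then 1 else 0)" if "\<gamma> \<in> S" for \<gamma>
  proof -
    have "\<gamma> x = 1 \<or> \<gamma> x = -1"
      using dual_group_pm_one[OF _ exp2] S(2) that by blast
    moreover have "\<sigma> \<gamma> = 1 \<or> \<sigma> \<gamma> = -1"
      using \<sigma> that by blast
    ultimately show ?thesis by auto
  qed
  have "indicator (char_cylinder S \<sigma>) x = (\<Prod>\<gamma>\<in>S. (1 + \<sigma> \<gamma> * \<gamma> x) / 2)"
    by (auto simp: factor char_cylinder_def indicator_def S(1) intro: prod_zero)
  also have "\<dots> = (1/2) ^ card S * (\<Prod>\<gamma>\<in>S. 1 + \<sigma> \<gamma> * \<gamma> x)"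
    by (simp add: prod_dividef power_one_over)
  also have "(\<Prod>\<gamma>\<in>S. 1 + \<sigma> \<gamma> * \<gamma> x) = (\<Sum>T\<in>Pow S. \<Prod>\<gamma>\<in>T. \<sigma> \<gamma> * \<gamma> x)"
    using prod_add[OF S(1), of "\<lambda>\<gamma>. \<sigma> \<gamma> * \<gamma> x" "\<lambda>_. 1"] by (simp add: add.commute)
  finally show ?thesis
    by (simp add: sum_distrib_left prod.distrib mult.assoc)
qed

lemma char_cylinder_closed: "S \<subseteq> dual_group \<Longrightarrow> closed (char_cylinder S \<sigma>)"
proof -
  assume S: "S \<subseteq> dual_group"
  have "char_cylinder S \<sigma> = (\<Inter>\<gamma>\<in>S. {x. \<gamma> x = \<sigma> \<gamma>})"
    by (auto simp: char_cylinder_def)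
  moreover have "closed {x. \<gamma> x = \<sigma> \<gamma>}" if "\<gamma> \<in> S" for \<gamma>
    using S that by (intro closed_Collect_eq continuous_intros) (auto simp: dual_group_def)
  ultimately show ?thesis by auto
qed

lemma measure_char_cylinder:
  fixes M :: "'a::topological_ab_group_add measure"
  assumes haar: "haar_prob M" and exp2: "\<forall>x::'a. x + x = 0"
    and S: "finite S" "S \<subseteq> dual_group" "char_independent S" and \<sigma>: "\<sigma> ` S \<subseteq> {1, -1}"
  shows "measure M (char_cylinder S \<sigma>) = (1/2) ^ card S"
proof -
  define c where "c T = (1/2) ^ card S * (\<Prod>\<gamma>\<in>T. \<sigma> \<gamma>)" for T :: "('a \<Rightarrow> complex) set"
  have char: "(\<lambda>x. \<Prod>\<gamma>\<in>T. \<gamma> x) \<in> dual_group" if "T \<in> Pow S" for T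
    using that S by (intro dual_group_prod) (auto intro: finite_subset)
  have trivial: "(\<lambda>x. \<Prod>\<gamma>\<in>T. \<gamma> x) = (\<lambda>x. 1) \<longleftrightarrow> T = {}" if "T \<in> Pow S" for T
    using S(3) that unfolding char_independent_def by auto
  have "complex_of_real (measure M (char_cylinder S \<sigma>)) =
      integral\<^sup>L M (\<lambda>x. complex_of_real (indicator (char_cylinder S \<sigma>) x))"
    using haar_space[OF haar] by (simp only: integral_complex_of_real integral_indicator) simp
  also have "\<dots> = integral\<^sup>L M (\<lambda>x. \<Sum>T\<in>Pow S. c T * (\<Prod>\<gamma>\<in>T. \<gamma> x))"
    by (simp only: of_real_indicator indicator_char_cylinder[OF exp2 S(1,2) \<sigma>] c_def)
  also have "\<dots> = (\<Sum>T\<in>Pow S. c T * integral\<^sup>L M (\<lambda>x. \<Prod>\<gamma>\<in>T. \<gamma> x))"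
    by (subst Bochner_Integration.integral_sum) (auto intro: haar_integrable_char[OF haar char])
  also have "\<dots> = (\<Sum>T\<in>Pow S. if T = {} then c T else 0)"
    by (intro sum.cong refl) (simp add: integral_char[OF haar char] trivial)
  also have "\<dots> = complex_of_real ((1/2) ^ card S)"
    using S(1) by (simp add: c_def)
  finally show ?thesis
    by (simp only: of_real_eq_iff)
qed

lemma A_norm_char_cylinder_le:
  fixes M :: "'a::topological_ab_group_add measure"
  assumes haar: "haar_prob M" and exp2: "\<forall>x::'a. x + x = 0"
    and S: "finite S" "S \<subseteq> dual_group" and \<sigma>: "\<sigma> ` S \<subseteq> {1, -1}"
  shows "A_norm M (indicator (char_cylinder S \<sigma>)) \<le> 1"
proof -
  define c where "c T = (1/2) ^ card S * (\<Prod>\<gamma>\<in>T. \<sigma> \<gamma>)" for T :: "('a \<Rightarrow> complex) set"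
  have char: "(\<lambda>x. \<Prod>\<gamma>\<in>T. \<gamma> x) \<in> dual_group" if "T \<in> Pow S" for T
    using that S by (intro dual_group_prod) (auto intro: finite_subset)
  have norm_c: "cmod (c T) = (1/2) ^ card S" if "T \<in> Pow S" for T
  proof -
    have "cmod (\<Prod>\<gamma>\<in>T. \<sigma> \<gamma>) = (\<Prod>\<gamma>\<in>T. cmod (\<sigma> \<gamma>))"
      by (rule prod_norm[symmetric])
    also have "\<dots> = 1"
      using that \<sigma> by (intro prod.neutral) force
    finally show ?thesis
      by (simp add: c_def norm_mult norm_power)
  qed
  have expansion: "indicator (char_cylinder S \<sigma>) = (\<lambda>x. \<Sum>T\<in>Pow S. c T * (\<Prod>\<gamma>\<in>T. \<gamma> x))"
    by (simp add: indicator_char_cylinder[OF exp2 S \<sigma>] c_def fun_eq_iff)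
  have "A_norm M (indicator (char_cylinder S \<sigma>)) \<le> (\<Sum>T\<in>Pow S. A_norm M (\<lambda>x. c T * (\<Prod>\<gamma>\<in>T. \<gamma> x)))"
    unfolding expansion using S(1) haar_integrable_char[OF haar char] by (intro A_norm_sum_le[OF haar]) auto
  also have "\<dots> = (\<Sum>T\<in>Pow S. ennreal ((1/2) ^ card S))"
    by (intro sum.cong refl) (simp add: A_norm_scaled_char[OF haar char] norm_c)
  also have "\<dots> = ennreal (\<Sum>T\<in>Pow S. (1/2) ^ card S)"
    by (rule sum_ennreal) simp
  also have "(\<Sum>T\<in>Pow S. (1/2::real) ^ card S) = 1"
    using S(1) by (simp add: card_Pow power_one_over)
  finally show ?thesis by simp
qed

lemma char_cylinder_disjoint:
  "\<gamma> \<in> S \<Longrightarrow> \<gamma> \<in> S' \<Longrightarrow> \<sigma> \<gamma> \<noteq> \<sigma>' \<gamma> \<Longrightarrow> char_cylinder S \<sigma> \<inter> char_cylinder S' \<sigma>' = {}"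
  by (auto simp: char_cylinder_def)

section \<open>A set of density alpha with small Fourier algebra norm\<close>

definition staircase_cylinder :: "(nat \<Rightarrow> 'a \<Rightarrow> complex) \<Rightarrow> nat \<Rightarrow> 'a set" where
  "staircase_cylinder g m = char_cylinder (g ` {..<2 ^ m}) (\<lambda>\<gamma>. if \<gamma> = g m then -1 else 1)"

lemma staircase_cylinder_disjoint:
  assumes "inj_on g {..<2 ^ m'}" and "m < m'"
  shows "staircase_cylinder g m \<inter> staircase_cylinder g m' = {}"
  unfolding staircase_cylinder_def
proof (rule char_cylinder_disjoint)
  have "m < 2 ^ m" "m' < 2 ^ m'" "m < 2 ^ m'"
    using less_exp less_trans[OF assms(2) less_exp] by auto
  then show "g m \<in> g ` {..<2 ^ m}" "g m \<in> g ` {..<2 ^ m'}"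
    by auto
  have "g m \<noteq> g m'"
  proof
    assume "g m = g m'"
    then have "m = m'"
      using inj_onD[OF assms(1)] \<open>m < 2 ^ m'\<close> \<open>m' < 2 ^ m'\<close> by simp
    with assms(2) show False by simp
  qed
  then show "(if g m = g m then -1 else 1) \<noteq> (if g m = g m' then -1 else (1::complex))"
    by simp
qed

lemma staircase_cylinder_sets:
  assumes "haar_prob M" and "g ` {..<2 ^ m} \<subseteq> dual_group"
  shows "staircase_cylinder g m \<in> sets M"
  using char_cylinder_closed[OF assms(2)] assms(1)
  by (simp add: staircase_cylinder_def haar_prob_def borel_closed)

lemma measure_staircase_cylinder:
  fixes M :: "'a::topological_ab_group_add measure"
  assumes "haar_prob M" and "\<forall>x::'a. x + x = 0" and "inj_on g {..<2 ^ m}"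
    and "g ` {..<2 ^ m} \<subseteq> dual_group" and "char_independent (g ` {..<2 ^ m})"
  shows "measure M (staircase_cylinder g m) = (1/2) ^ (2 ^ m)"
  unfolding staircase_cylinder_def using assms
  by (subst measure_char_cylinder) (auto simp: card_image)

lemma A_norm_staircase_cylinder_le:
  fixes M :: "'a::topological_ab_group_add measure"
  assumes "haar_prob M" and "\<forall>x::'a. x + x = 0" and "g ` {..<2 ^ m} \<subseteq> dual_group"
  shows "A_norm M (indicator (staircase_cylinder g m)) \<le> 1"
  unfolding staircase_cylinder_def using assms
  by (intro A_norm_char_cylinder_le) auto

definition alpha :: "nat \<Rightarrow> real" where
  "alpha k = (\<Sum>m<k. (1/2) ^ (2 ^ m))"

lemma exists_set_measure_alpha_A_norm_le:
  fixes M :: "'a::topological_ab_group_add measure"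
  assumes haar: "haar_prob M" and exp2: "\<forall>x::'a. x + x = 0"
    and dim: "dual_dim_ge TYPE('a) (2 ^ (k - 1))"
  shows "\<exists>A. A \<in> sets M \<and> measure M A = alpha k \<and> A_norm M (indicator A) \<le> of_nat k"
proof -
  obtain g :: "nat \<Rightarrow> 'a \<Rightarrow> complex"
    where g: "inj_on g {..<2 ^ (k - 1)}" "g ` {..<2 ^ (k - 1)} \<subseteq> dual_group"
      "char_independent (g ` {..<2 ^ (k - 1)})"
    by (rule dual_dim_ge_enumeration[OF dim])
  have "(2::nat) ^ m \<le> 2 ^ (k - 1)" if "m < k" for m
    using that by (intro power_increasing) auto
  note inj = char_enumeration_restrict(1)[OF g this]
    and block = char_enumeration_restrict(2)[OF g this]
    and indep = char_enumeration_restrict(3)[OF g this]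
  define A where "A = (\<Union>m<k. staircase_cylinder g m)"
  have sets: "staircase_cylinder g m \<in> sets M" if "m < k" for m
    using staircase_cylinder_sets[OF haar block[OF that]] .
  have disjoint: "disjoint_family_on (staircase_cylinder g) {..<k}"
    unfolding disjoint_family_on_def
    by (metis Int_commute inj lessThan_iff linorder_neqE_nat staircase_cylinder_disjoint)
  have "A \<in> sets M"
    using sets by (auto simp: A_def)
  moreover have "measure M A = alpha k"
  proof -
    have "measure M A = (\<Sum>m<k. measure M (staircase_cylinder g m))"
      unfolding A_def using sets disjoint
      by (intro finite_measure.finite_measure_finite_Union[OF haar_finite_measure[OF haar]]) auto
    also have "\<dots> = alpha k"
      unfolding alpha_def using measure_staircase_cylinder[OF haar exp2 inj block indep] by simp
    finally show ?thesis .
  qed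
  moreover have "A_norm M (indicator A) \<le> of_nat k"
  proof -
    have "A_norm M (indicator A) \<le> (\<Sum>m<k. A_norm M (indicator (staircase_cylinder g m)))"
      unfolding A_def using sets disjoint by (intro A_norm_indicator_disjoint_UN_le[OF haar]) auto
    also have "\<dots> \<le> (\<Sum>m<k. 1)"
      using A_norm_staircase_cylinder_le[OF haar exp2 block] by (intro sum_mono) simp
    finally show ?thesis
      by simp
  qed
  ultimately show ?thesis
    by blast
qed

section \<open>Finite subgroups of the dual\<close>

lemma exponent_two_submonoid_extend:
  fixes W :: "'a::comm_monoid_mult set"
  assumes closed: "\<And>a b. a \<in> W \<Longrightarrow> b \<in> W \<Longrightarrow> a * b \<in> W"
    and square: "\<And>a. a \<in> W \<Longrightarrow> a * a = 1" and g: "g * g = 1" "g \<notin> W"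
  shows "finite W \<Longrightarrow> card (W \<union> (*) g ` W) = 2 * card W"
    and "a \<in> W \<union> (*) g ` W \<Longrightarrow> b \<in> W \<union> (*) g ` W \<Longrightarrow> a * b \<in> W \<union> (*) g ` W"
proof -
  have gg: "g * (g * a) = a" for a
    using g(1) by (metis mult.assoc mult_1)
  have translate_iff: "a \<in> (*) g ` W \<longleftrightarrow> g * a \<in> W" for a
    using gg by (metis image_iff)
  have "W \<inter> (*) g ` W = {}"
  proof (rule ccontr)
    assume "W \<inter> (*) g ` W \<noteq> {}"
    then obtain w where w: "w \<in> W" "g * w \<in> W" by auto
    then have "g * w * w \<in> W"
      using closed by blast
    then show False
      using square[OF w(1)] g(2) by (simp add: mult.assoc)
  qed
  moreover have "inj_on ((*) g) W"
    by (rule inj_onI) (metis gg)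
  ultimately show "finite W \<Longrightarrow> card (W \<union> (*) g ` W) = 2 * card W"
    by (simp add: card_Un_disjoint card_image)
  assume "a \<in> W \<union> (*) g ` W" "b \<in> W \<union> (*) g ` W"
  then consider "a \<in> W" "b \<in> W" | "a \<in> W" "g * b \<in> W" | "g * a \<in> W" "b \<in> W" | "g * a \<in> W" "g * b \<in> W"
    unfolding Un_iff translate_iff by blast
  then have "a * b \<in> W \<or> g * (a * b) \<in> W"
  proof cases
    case 2
    then show ?thesis using closed[of a "g * b"] by (simp add: ac_simps)
  next
    case 3
    then show ?thesis using closed[of "g * a" b] by (simp add: ac_simps)
  next
    case 4
    then show ?thesis using closed[of "g * a" "g * b"] gg[of "a * b"] by (simp add: ac_simps)
  qed (use closed in blast)
  then show "a * b \<in> W \<union> (*) g ` W"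
    unfolding Un_iff translate_iff .
qed

lemma exponent_two_submonoid_card_pow2:
  fixes V :: "'a::comm_monoid_mult set"
  assumes V: "finite V" "1 \<in> V" "\<And>a b. a \<in> V \<Longrightarrow> b \<in> V \<Longrightarrow> a * b \<in> V"
    and square: "\<And>a. a \<in> V \<Longrightarrow> a * a = 1"
  shows "\<exists>d. card V = 2 ^ d"
proof -
  have "\<exists>d. card V = 2 ^ d"
    if "W \<subseteq> V" "\<And>a b. a \<in> W \<Longrightarrow> b \<in> W \<Longrightarrow> a * b \<in> W" "card W = 2 ^ j" for W j
    using that
  proof (induction "card V - card W" arbitrary: W j rule: less_induct)
    case less
    show ?case
    proof (cases "W = V")
      case True
      with less.prems show ?thesis by blast
    next
      case False
      with less.prems obtain g where g: "g \<in> V" "g \<notin> W" by blast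
      define W' where "W' = W \<union> (*) g ` W"
      note extend = exponent_two_submonoid_extend[OF less.prems(2) _ square[OF g(1)] g(2), folded W'_def]
      have "finite W" "\<And>a. a \<in> W \<Longrightarrow> a * a = 1"
        using less.prems(1) V(1) square finite_subset by blast+
      then have card_W': "card W' = 2 ^ Suc j"
        using extend(1) less.prems(3) by simp
      have "W' \<subseteq> V"
        using less.prems(1) g(1) V(3) by (auto simp: W'_def)
      moreover have "card W < card W'"
        using card_W' less.prems(3) by simp
      ultimately have "card V - card W' < card V - card W"
        using card_mono[OF V(1) \<open>W' \<subseteq> V\<close>] by (intro diff_less_mono2) auto
      with \<open>W' \<subseteq> V\<close> show ?thesis
        using less.hyps card_W' extend(2) \<open>\<And>a. a \<in> W \<Longrightarrow> a * a = 1\<close> by blast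
    qed
  qed
  from this[of "{1}" 0] V(2) show ?thesis
    by simp
qed

lemma finite_dual_subgroup_card_pow2:
  fixes V :: "('a::topological_ab_group_add \<Rightarrow> complex) set"
  assumes exp2: "\<forall>x::'a. x + x = 0" and V: "dual_subgroup V" "finite V"
  shows "\<exists>d. card V = 2 ^ d"
proof (rule exponent_two_submonoid_card_pow2)
  show "finite V" "1 \<in> V"
    using V by (simp_all add: dual_subgroup_def one_fun_def)
  show "a * b \<in> V" if "a \<in> V" "b \<in> V" for a b
    using V that by (simp add: dual_subgroup_def times_fun_def)
  show "a * a = 1" if "a \<in> V" for a
  proof -
    have "a \<in> dual_group"
      using V that by (auto simp: dual_subgroup_def)
    then show ?thesis
      using dual_group_square[OF _ exp2] by (simp add: fun_eq_iff)
  qed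
qed

section \<open>The fractional part of alpha times a power of two\<close>

lemma sum_double_exp_tail_le:
  assumes "1 \<le> m0" and "m0 \<le> k"
  shows "(\<Sum>m\<in>{m0..<k}. (1/2::real) ^ (2 ^ m)) \<le> 4/3 * (1/2) ^ (2 ^ m0) - 4/3 * (1/2) ^ (2 ^ k)"
  using assms(2)
proof (induction k rule: dec_induct)
  case base
  then show ?case by simp
next
  case (step k)
  define x :: real where "x = (1/2) ^ (2 ^ k)"
  have "x \<le> (1/2) ^ (2 ^ 1)"
    unfolding x_def using assms(1) step(1) by (intro power_decreasing power_increasing) auto
  then have "x * x \<le> x * (1/4)"
    by (intro mult_left_mono) (simp_all add: power2_eq_square x_def)
  moreover have "(1/2::real) ^ (2 ^ Suc k) = x * x"
    by (simp add: x_def mult_2 power_add)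
  moreover have "(\<Sum>m\<in>{m0..<Suc k}. (1/2::real) ^ (2 ^ m)) = (\<Sum>m\<in>{m0..<k}. (1/2) ^ (2 ^ m)) + x"
    using step(1) by (simp add: x_def)
  ultimately show ?case
    using step.IH x_def by linarith
qed

lemma frac_alpha_mult_pow2_eq_tail:
  assumes "m0 \<le> k" and "\<And>m. m < m0 \<Longrightarrow> 2 ^ m \<le> d"
  shows "frac (alpha k * 2 ^ d) = frac (2 ^ d * (\<Sum>m\<in>{m0..<k}. (1/2::real) ^ (2 ^ m)))"
proof -
  have "2 ^ d * (1/2::real) ^ (2 ^ m) = 2 ^ (d - 2 ^ m)" if "m < m0" for m
  proof -
    have "(2::real) ^ d = 2 ^ (d - 2 ^ m) * 2 ^ (2 ^ m)"
      using assms(2)[OF that] by (simp flip: power_add)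
    then show ?thesis by (simp add: power_one_over)
  qed
  then have "2 ^ d * (\<Sum>m<m0. (1/2::real) ^ (2 ^ m)) \<in> \<int>"
    by (simp add: sum_distrib_left Ints_sum)
  moreover have "alpha k = (\<Sum>m<m0. (1/2) ^ (2 ^ m)) + (\<Sum>m\<in>{m0..<k}. (1/2) ^ (2 ^ m))"
    unfolding alpha_def using assms(1)
    by (metis atLeast0LessThan sum.atLeastLessThan_concat zero_le)
  ultimately show ?thesis
    by (simp add: algebra_simps frac_add_int_left)
qed

lemma sum_double_exp_tail_bounds:
  assumes "1 \<le> m0" and "m0 < k"
  shows "(1/2) ^ (2 ^ m0) \<le> (\<Sum>m\<in>{m0..<k}. (1/2::real) ^ (2 ^ m))"
    and "(\<Sum>m\<in>{m0..<k}. (1/2::real) ^ (2 ^ m)) \<le> 4/3 * (1/2) ^ (2 ^ m0)"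
proof -
  show "(1/2) ^ (2 ^ m0) \<le> (\<Sum>m\<in>{m0..<k}. (1/2::real) ^ (2 ^ m))"
    using assms(2) by (intro member_le_sum) auto
  have "(\<Sum>m\<in>{m0..<k}. (1/2::real) ^ (2 ^ m)) \<le> 4/3 * (1/2) ^ (2 ^ m0) - 4/3 * (1/2) ^ (2 ^ k)"
    using sum_double_exp_tail_le[OF assms(1), of k] assms(2) by simp
  moreover have "0 \<le> (1/2::real) ^ (2 ^ k)"
    by simp
  ultimately show "(\<Sum>m\<in>{m0..<k}. (1/2::real) ^ (2 ^ m)) \<le> 4/3 * (1/2) ^ (2 ^ m0)"
    by linarith
qed

lemma alpha_bounds:
  assumes "1 \<le> k"
  shows "1/2 \<le> alpha k" and "alpha k \<le> 5/6"
proof -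
  have "alpha k = 1/2 + (\<Sum>m\<in>{1..<k}. (1/2) ^ (2 ^ m))"
    unfolding alpha_def using assms by (simp add: lessThan_atLeast0 sum.atLeast_Suc_lessThan)
  moreover have "(\<Sum>m\<in>{1..<k}. (1/2::real) ^ (2 ^ m)) \<le> 1/3"
  proof (cases "k = 1")
    case False
    then show ?thesis
      using sum_double_exp_tail_bounds(2)[of 1 k] assms by (simp add: power2_eq_square)
  qed simp
  moreover have "0 \<le> (\<Sum>m\<in>{1..<k}. (1/2::real) ^ (2 ^ m))"
    by (simp add: sum_nonneg)
  ultimately show "1/2 \<le> alpha k" "alpha k \<le> 5/6"
    by linarith+
qed

lemma frac_alpha_bound:
  assumes "1 \<le> k"
  shows "1/8 \<le> frac (alpha k) * (1 - frac (alpha k))"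
proof -
  note bounds = alpha_bounds[OF assms]
  then have "0 \<le> (alpha k - 1/6) * (5/6 - alpha k)"
    by (intro mult_nonneg_nonneg) auto
  moreover have "(alpha k - 1/6) * (5/6 - alpha k) = alpha k * (1 - alpha k) - 5/36"
    by (simp add: field_simps)
  ultimately show ?thesis
    using bounds by (simp add: frac_eq)
qed

lemma pow2_div_pow2_bounds:
  assumes "d < p" and "p \<le> 2 * d"
  shows "1 / 2 ^ d \<le> (2::real) ^ d / 2 ^ p" and "(2::real) ^ d / 2 ^ p \<le> 1/2"
proof -
  have "(2::real) ^ p \<le> 2 ^ (d + d)"
    using assms(2) by (intro power_increasing) auto
  then show "1 / 2 ^ d \<le> (2::real) ^ d / 2 ^ p"
    by (simp add: field_simps power_add)
  have "(2::real) ^ (d + 1) \<le> 2 ^ p"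
    using assms(1) by (intro power_increasing) auto
  then show "(2::real) ^ d / 2 ^ p \<le> 1/2"
    by (simp add: field_simps)
qed

lemma frac_alpha_mult_pow2_bound:
  assumes d: "0 < d" "d < 2 ^ (k - 1)"
  shows "1 / (8 * 2 ^ d) \<le> frac (alpha k * 2 ^ d) * (1 - frac (alpha k * 2 ^ d))"
proof -
  define m0 where "m0 = (LEAST m. d < 2 ^ m)"
  have "m0 \<le> k - 1"
    unfolding m0_def using d(2) by (rule Least_le)
  moreover have "k \<noteq> 0"
    using d by (cases k) auto
  ultimately have m0: "d < 2 ^ m0" "m0 < k"
    unfolding m0_def using d(2) by (auto intro: LeastI)
  have below_m0: "2 ^ m \<le> d" if "m < m0" for m
    using not_less_Least[OF that[unfolded m0_def]] by simp
  have "1 \<le> m0"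
    using d(1) m0(1) by (cases m0) auto
  define F where "F = 2 ^ d * (\<Sum>m\<in>{m0..<k}. (1/2::real) ^ (2 ^ m))"
  define e :: real where "e = 2 ^ d / 2 ^ (2 ^ m0)"
  have F: "e \<le> F" "F \<le> 4/3 * e"
    using sum_double_exp_tail_bounds[OF \<open>1 \<le> m0\<close> m0(2)]
    unfolding e_def F_def by (simp_all add: power_one_over field_simps)
  have "2 ^ m0 \<le> 2 * d"
    using below_m0[of "m0 - 1"] \<open>1 \<le> m0\<close> by (cases m0) auto
  with m0(1) have "1 / 2 ^ d \<le> e" "e \<le> 1/2"
    unfolding e_def by (rule pow2_div_pow2_bounds)+
  then have F_range: "0 \<le> F" "F \<le> 2/3"
    using F \<open>e \<le> 1/2\<close> by (auto intro: order_trans[rotated])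
  have "frac (alpha k * 2 ^ d) = F"
    using frac_alpha_mult_pow2_eq_tail[of m0 k d] m0(2) below_m0 F_range unfolding F_def by (simp add: frac_eq)
  moreover have "1 / (8 * 2 ^ d) \<le> F * (1 - F)"
  proof -
    have "1 / (8 * 2 ^ d) \<le> (1 / 2 ^ d) / (3 :: real)"
      by (simp add: field_simps)
    also have "\<dots> \<le> F / 3"
      using F(1) \<open>1 / 2 ^ d \<le> e\<close> by (intro divide_right_mono) auto
    also have "\<dots> \<le> F * (1 - F)"
      using mult_left_mono[OF _ F_range(1), of "1/3" "1 - F"] F_range(2) by simp
    finally show ?thesis .
  qed
  ultimately show ?thesis by simp
qed

theorem mainTheorem15:
  fixes M :: "'a::{topological_ab_group_add, t2_space} measure" and k :: nat
  assumes compactG: "compact (UNIV :: 'a set)"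
    and exp2: "\<forall>x::'a. x + x = 0"
    and haar: "haar_prob M"
    and k1: "k \<ge> 1"
    and dim: "dual_dim_ge TYPE('a) (2 ^ (k - 1))"
  shows "(\<forall>V :: ('a \<Rightarrow> complex) set. dual_subgroup V \<and> finite V \<and> card V \<le> 2 ^ (2 ^ (k - 1)) - 1 \<longrightarrow>
            frac ((\<Sum>m<k. (1/2::real) ^ (2 ^ m)) * real (card V)) *
              (1 - frac ((\<Sum>m<k. (1/2::real) ^ (2 ^ m)) * real (card V)))
            \<ge> 1 / (8 * real (card V)))
      \<and> (\<exists>A. A \<in> sets M \<and> measure M A = (\<Sum>m<k. (1/2::real) ^ (2 ^ m)) \<and>
            A_norm M (indicator A) \<le> of_nat k)"
  unfolding alpha_def[symmetric]
proof (intro conjI allI impI)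
  fix V :: "('a \<Rightarrow> complex) set"
  assume V: "dual_subgroup V \<and> finite V \<and> card V \<le> 2 ^ (2 ^ (k - 1)) - 1"
  then obtain d where d: "card V = 2 ^ d"
    using finite_dual_subgroup_card_pow2[OF exp2] by blast
  have "(0::nat) < 2 ^ (2 ^ (k - 1))"
    by simp
  with V d have "(2::nat) ^ d < 2 ^ (2 ^ (k - 1))"
    by linarith
  then have "d < 2 ^ (k - 1)"
    by (simp add: power_less_imp_less_exp)
  then show "1 / (8 * real (card V)) \<le> frac (alpha k * real (card V)) * (1 - frac (alpha k * real (card V)))"
    using frac_alpha_bound[OF k1] frac_alpha_mult_pow2_bound[of d k] d by (cases "d = 0") simp_all
next
  show "\<exists>A. A \<in> sets M \<and> measure M A = alpha k \<and> A_norm M (indicator A) \<le> of_nat k"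
    by (rule exists_set_measure_alpha_A_norm_le[OF haar exp2 dim])
qed

end
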